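(* Let $1\le m_1\le m$ be integers and let a set of $n$ jobs with processing times $p_1,\dots,p_n>0$ be given, all available at time $0$, to be processed non-preemptively on identical machines that always work at full rate. Then the minimum total completion time of the jobs on $m_1$ identical machines is at most $\left\lceil\frac{m}{m_1}\right\rceil$ times the minimum total completion time of the jobs on $m$ identical machines.
   Context: Each job is processed by exactly one machine without interruption, each machine processes one job at a time, and the total completion time is $\sum_j C_j$ where $C_j$ is the completion time of job $j$. *)

theory Defs
  imports Complex_Main
begin

definition feasible_schedule ::
  "nat \<Rightarrow> nat \<Rightarrow> (nat \<Rightarrow> real) \<Rightarrow> (nat \<Rightarrow> nat) \<Rightarrow> (nat \<Rightarrow> real) \<Rightarrow> bool" where
  "feasible_schedule k n p mach S \<longleftrightarrow>
     (\<forall>j<n. mach j < k \<and> 0 \<le> S j) \<and>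
     (\<forall>i<n. \<forall>j<n. i \<noteq> j \<and> mach i = mach j \<longrightarrow> S i + p i \<le> S j \<or> S j + p j \<le> S i)"

definition total_completion_time :: "nat \<Rightarrow> (nat \<Rightarrow> real) \<Rightarrow> (nat \<Rightarrow> real) \<Rightarrow> real" where
  "total_completion_time n p S = (\<Sum>j<n. S j + p j)"

definition opt_tct :: "nat \<Rightarrow> nat \<Rightarrow> (nat \<Rightarrow> real) \<Rightarrow> real" where
  "opt_tct k n p = Inf {total_completion_time n p S | mach S. feasible_schedule k n p mach S}"

end

theory Submission
  imports Defs "HOL-Library.Product_Lexorder"
begin

text \<open>Group the m machines into m1 blocks of k = \<lceil>m/m1\<rceil> consecutive machines and
replace each block by a single machine that processes the jobs of the block back to back,
in the order of their old completion times. The jobs of the block finishing by time C j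
occupy disjoint intervals of [0, C j] on each of the k old machines, so their total
processing time, which is the new completion time of j, is at most k * C j.\<close>

lemma sum_lengths_le_of_disjoint_intervals:
  fixes S p :: "'a \<Rightarrow> real"
  assumes "finite A" and "0 \<le> T"
    and "\<And>i. i \<in> A \<Longrightarrow> 0 \<le> S i \<and> 0 < p i \<and> S i + p i \<le> T"
    and "\<And>i j. i \<in> A \<Longrightarrow> j \<in> A \<Longrightarrow> i \<noteq> j \<Longrightarrow> S i + p i \<le> S j \<or> S j + p j \<le> S i"
  shows "sum p A \<le> T"
  using assms
proof (induction A arbitrary: T rule: finite_remove_induct)
  case empty
  then show ?case by simp
next
  case (remove A)
  let ?C = "\<lambda>i. S i + p i"
  obtain j where j: "j \<in> A" and last: "\<And>i. i \<in> A \<Longrightarrow> ?C i \<le> ?C j"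
    using Max_in[of "?C ` A"] Max_ge[of "?C ` A"] remove.hyps by fastforce
  have before_j: "?C i \<le> S j" if "i \<in> A - {j}" for i
    using remove.prems(2,3)[of i] remove.prems(3)[of i j] last[of i] that j by fastforce
  have "sum p (A - {j}) \<le> S j"
    using remove.prems before_j j by (intro remove.IH) auto
  then show ?case
    using j remove.hyps(1) remove.prems(2)[of j] by (simp add: sum.remove)
qed

text \<open>Pairs are ordered lexicographically: jobs sharing machine g j run back to back
in increasing order of the key c, ties broken by the job index.\<close>

definition sequenced_start ::
  "nat \<Rightarrow> (nat \<Rightarrow> real) \<Rightarrow> (nat \<Rightarrow> nat) \<Rightarrow> (nat \<Rightarrow> real) \<Rightarrow> nat \<Rightarrow> real" where
  "sequenced_start n p g c j = (\<Sum>i | i < n \<and> g i = g j \<and> (c i, i) < (c j, j). p i)"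

lemma sequenced_completion:
  assumes "j < n"
  shows "sequenced_start n p g c j + p j =
    (\<Sum>i | i < n \<and> g i = g j \<and> (c i, i) \<le> (c j, j). p i)"
proof -
  have "{i. i < n \<and> g i = g j \<and> (c i, i) \<le> (c j, j)} =
      insert j {i. i < n \<and> g i = g j \<and> (c i, i) < (c j, j)}"
    using assms by (auto simp: order_le_less)
  then show ?thesis
    unfolding sequenced_start_def by (simp add: add.commute)
qed

lemma sequenced_completion_le_start:
  assumes "i < n" "j < n" "g i = g j" "(c i, i) < (c j, j)" and "\<forall>l<n. 0 \<le> p l"
  shows "sequenced_start n p g c i + p i \<le> sequenced_start n p g c j"
proof -
  have "sequenced_start n p g c i + p i =
      (\<Sum>l | l < n \<and> g l = g i \<and> (c l, l) \<le> (c i, i). p l)"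
    using sequenced_completion[OF \<open>i < n\<close>] .
  also have "\<dots> \<le> sequenced_start n p g c j"
    unfolding sequenced_start_def using assms by (intro sum_mono2) auto
  finally show ?thesis .
qed

lemma feasible_sequenced:
  assumes "\<forall>j<n. g j < k" and "\<forall>j<n. 0 \<le> p j"
  shows "feasible_schedule k n p g (sequenced_start n p g c)"
  unfolding feasible_schedule_def
proof (intro conjI allI impI)
  fix j assume "j < n"
  then show "g j < k" "0 \<le> sequenced_start n p g c j"
    using assms unfolding sequenced_start_def by (auto intro: sum_nonneg)
next
  fix i j assume "i < n" "j < n" "i \<noteq> j \<and> g i = g j"
  moreover have "(c i, i) < (c j, j) \<or> (c j, j) < (c i, i)"
    using \<open>i \<noteq> j \<and> g i = g j\<close> by (metis neq_iff prod.inject)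
  ultimately show "sequenced_start n p g c i + p i \<le> sequenced_start n p g c j \<or>
      sequenced_start n p g c j + p j \<le> sequenced_start n p g c i"
    using sequenced_completion_le_start assms(2) by metis
qed

lemma sum_processing_completed_by_le:
  assumes "feasible_schedule m n p mach S" and "\<forall>j<n. 0 < p j"
    and "finite Q" and "0 \<le> T"
  shows "(\<Sum>i | i < n \<and> mach i \<in> Q \<and> S i + p i \<le> T. p i) \<le> real (card Q) * T"
proof -
  let ?A = "{i. i < n \<and> mach i \<in> Q \<and> S i + p i \<le> T}"
  have "sum p ?A = (\<Sum>q\<in>Q. sum p {i \<in> ?A. mach i = q})"
    using assms(3) by (intro sum.group[symmetric]) auto
  also have "\<dots> \<le> (\<Sum>q\<in>Q. T)"
  proof (rule sum_mono)
    fix q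
    show "sum p {i \<in> ?A. mach i = q} \<le> T"
      by (rule sum_lengths_le_of_disjoint_intervals[where S = S])
        (use assms(1,2,4) in \<open>auto simp: feasible_schedule_def\<close>)
  qed
  finally show ?thesis by simp
qed

lemma div_fibre_eq_image:
  fixes k b :: nat
  assumes "0 < k"
  shows "{q. q div k = b} = (\<lambda>r. b * k + r) ` {..<k}"
proof
  show "{q. q div k = b} \<subseteq> (\<lambda>r. b * k + r) ` {..<k}"
  proof
    fix q assume "q \<in> {q. q div k = b}"
    then have "q = b * k + q mod k" using div_mult_mod_eq[of q k] by simp
    then show "q \<in> (\<lambda>r. b * k + r) ` {..<k}" using assms by auto
  qed
qed (use assms in auto)

lemma completion_time_nonneg:
  assumes "feasible_schedule m n p mach S" and "\<forall>j<n. 0 \<le> p j" and "j < n"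
  shows "0 \<le> S j + p j"
  using assms unfolding feasible_schedule_def by (simp add: add_nonneg_nonneg)

lemma merged_schedule:
  assumes feasible: "feasible_schedule m n p mach S" and pos: "\<forall>j<n. 0 < p j"
    and "0 < k" and "m \<le> k * m1"
  defines "S' \<equiv> sequenced_start n p (\<lambda>j. mach j div k) (\<lambda>j. S j + p j)"
  shows "feasible_schedule m1 n p (\<lambda>j. mach j div k) S'"
    and "total_completion_time n p S' \<le> real k * total_completion_time n p S"
proof -
  show "feasible_schedule m1 n p (\<lambda>j. mach j div k) S'"
    unfolding S'_def
  proof (rule feasible_sequenced)
    show "\<forall>j<n. mach j div k < m1"
      using feasible \<open>0 < k\<close> \<open>m \<le> k * m1\<close> unfolding feasible_schedule_def
      by (auto simp: div_less_iff_less_mult mult.commute)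
  qed (use pos in auto)
  have "S' j + p j \<le> real k * (S j + p j)" if "j < n" for j
  proof -
    let ?block = "{q. q div k = mach j div k}"
    have completion_nonneg: "0 \<le> S j + p j"
      using completion_time_nonneg[OF feasible] pos that by (simp add: less_imp_le)
    have "S' j + p j \<le>
        (\<Sum>i | i < n \<and> mach i \<in> ?block \<and> S i + p i \<le> S j + p j. p i)"
      unfolding S'_def sequenced_completion[OF \<open>j < n\<close>]
      using pos by (intro sum_mono2) auto
    also have "\<dots> \<le> real (card ?block) * (S j + p j)"
      using completion_nonneg
      by (intro sum_processing_completed_by_le[OF feasible pos])
        (auto simp: div_fibre_eq_image[OF \<open>0 < k\<close>])
    also have "\<dots> \<le> real k * (S j + p j)"
    proof (rule mult_right_mono)
      show "real (card ?block) \<le> real k"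
        using card_image_le[of "{..<k}" "\<lambda>r. mach j div k * k + r"]
        by (simp add: div_fibre_eq_image[OF \<open>0 < k\<close>])
    qed (rule completion_nonneg)
    finally show ?thesis .
  qed
  then show "total_completion_time n p S' \<le> real k * total_completion_time n p S"
    unfolding total_completion_time_def sum_distrib_left by (intro sum_mono) auto
qed

lemma opt_tct_le:
  assumes "feasible_schedule k n p mach S" and "\<forall>j<n. 0 \<le> p j"
  shows "opt_tct k n p \<le> total_completion_time n p S"
  unfolding opt_tct_def
proof (rule cInf_lower)
  show "bdd_below {total_completion_time n p S | mach S. feasible_schedule k n p mach S}"
    using completion_time_nonneg[OF _ assms(2)]
    by (intro bdd_belowI[where m = 0]) (auto simp: total_completion_time_def intro: sum_nonneg)
qed (use assms(1) in blast)

lemma opt_tct_greatest: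
  assumes "feasible_schedule k n p mach\<^sub>0 S\<^sub>0"
    and "\<And>mach S. feasible_schedule k n p mach S \<Longrightarrow> x \<le> total_completion_time n p S"
  shows "x \<le> opt_tct k n p"
  unfolding opt_tct_def using assms by (intro cInf_greatest) auto

lemma opt_tct_fewer_machines:
  assumes "1 \<le> m" and "m \<le> k * m1" and pos: "\<forall>j<n. 0 < p j"
  shows "opt_tct m1 n p \<le> real k * opt_tct m n p"
proof -
  have "0 < k" using assms(1,2) by (cases k) auto
  have nonneg: "\<forall>j<n. 0 \<le> p j" using pos by (simp add: less_imp_le)
  have "opt_tct m1 n p / real k \<le> opt_tct m n p"
  proof (rule opt_tct_greatest)
    show "feasible_schedule m n p (\<lambda>_. 0) (sequenced_start n p (\<lambda>_. 0) (\<lambda>_. 0))"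
      using assms(1) nonneg by (intro feasible_sequenced) auto
  next
    fix mach S assume "feasible_schedule m n p mach S"
    note merged = merged_schedule[OF this pos \<open>0 < k\<close> \<open>m \<le> k * m1\<close>]
    have "opt_tct m1 n p \<le> real k * total_completion_time n p S"
      using opt_tct_le[OF merged(1) nonneg] merged(2) by linarith
    then show "opt_tct m1 n p / real k \<le> total_completion_time n p S"
      using \<open>0 < k\<close> by (simp add: divide_le_eq mult.commute)
  qed
  then show ?thesis using \<open>0 < k\<close> by (simp add: divide_le_eq mult.commute)
qed

theorem claim2:
  fixes m m1 n :: nat and p :: "nat \<Rightarrow> real"
  assumes "1 \<le> m1" and "m1 \<le> m" and "\<forall>j<n. p j > 0"
  shows "opt_tct m1 n p \<le> real_of_int \<lceil>real m / real m1\<rceil> * opt_tct m n p"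
proof -
  define k where "k = nat \<lceil>real m / real m1\<rceil>"
  have k: "real k = real_of_int \<lceil>real m / real m1\<rceil>"
    unfolding k_def by simp
  have "real m / real m1 \<le> real k"
    using le_of_int_ceiling k by simp
  then have "real m \<le> real k * real m1"
    using assms(1) by (simp add: divide_le_eq)
  then have "m \<le> k * m1" by (metis of_nat_le_iff of_nat_mult)
  then show ?thesis
    using opt_tct_fewer_machines[of m k m1 n p] assms k by simp
qed

end
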